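(* Suppose the PL condition, KKT regularity, and projected-gradient injectivity (below) hold for all $t=1,\dots,T$, with noiseless observations. If there exists $\bar{\boldsymbol{\theta}}\in\Theta$ such that $\ell_t(\bar{\boldsymbol{\theta}})=0$ for all $t=1,\dots,T$, then $\boldsymbol{\theta}_t=\bar{\boldsymbol{\theta}}$ for all $t$.
   Context: Setting: for periods $t=1,\dots,T$, data $\mathbf{B}_t\in\mathbb{R}^{k\times n}$, $\mathbf{q}_t\in\mathbb{R}^k_{+}$ define $\mathcal{X}_t=\{\mathbf{x}\in\mathbb{R}^n_+:\mathbf{B}_t\mathbf{x}\le\mathbf{q}_t\}$. $\Theta\subset\mathbb{R}^p$ is a parameter set, $c_t:\mathbb{R}^n\times\Theta\to\mathbb{R}$ is differentiable in $\mathbf{x}$, and allocations $\mathbf{x}_t\in\mathbb{R}^n_+$ are observed. $\mathrm{P}_t:=I-\mathbf{B}_t^\top(\mathbf{B}_t\mathbf{B}_t^\top)^\dagger\mathbf{B}_t$. The inverse loss is $$\ell_t(\boldsymbol{\theta}) := \|(\mathbf{B}_t\mathbf{x}_t-\mathbf{q}_t)_+\|^2+\inf_{\boldsymbol{\lambda}_t\ge 0}\|\nabla_{\mathbf{x}}c_t(\mathbf{x}_t;\boldsymbol{\theta})+\mathbf{B}_t^\top\boldsymbol{\lambda}_t\|^2+|\boldsymbol{\lambda}_t^\top(\mathbf{B}_t\mathbf{x}_t-\mathbf{q}_t)|,$$ with $\boldsymbol{\lambda}_t\ge0$ the multiplier appearing in the dual feasibility term. PL condition: there is $\mu>0$ with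 $\frac{1}{2\mu}\|\nabla_{\mathbf{x}}c_t(\mathbf{x};\boldsymbol{\theta})\|^2\ge c_t(\mathbf{x};\boldsymbol{\theta})-\min_{\mathbf{y}\in\mathcal{X}_t}c_t(\mathbf{y};\boldsymbol{\theta})$ for all $t$, $\boldsymbol{\theta}\in\Theta$, $\mathbf{x}\in\mathbb{R}^n_+$. KKT regularity: for each $t$ there exist a latent parameter $\boldsymbol{\theta}_t\in\Theta$ and $\boldsymbol{\lambda}_t\in\mathbb{R}^k_+$ with $\nabla_{\mathbf{x}}c_t(\mathbf{x}_t;\boldsymbol{\theta}_t)+\mathbf{B}_t^\top\boldsymbol{\lambda}_t=\mathbf{0}$, $\mathbf{B}_t\mathbf{x}_t\le\mathbf{q}_t$, $\boldsymbol{\lambda}_t^\top(\mathbf{B}_t\mathbf{x}_t-\mathbf{q}_t)=0$. Projected-gradient injectivity: for each $t$, $\boldsymbol{\theta}\mapsto\mathrm{P}_t\nabla_{\mathbf{x}}c_t(\mathbf{x}_t;\boldsymbol{\theta})$ is injective on $\Theta$. *)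

theory Defs
  imports "HOL-Analysis.Analysis"
begin

definition nonneg_vec :: "real^'n \<Rightarrow> bool" where
  "nonneg_vec v \<longleftrightarrow> (\<forall>i. 0 \<le> v $ i)"

definition pos_part_vec :: "real^'n \<Rightarrow> real^'n" where
  "pos_part_vec v = (\<chi> i. max (v $ i) 0)"

definition is_pinv :: "real^'m^'n \<Rightarrow> real^'n^'m \<Rightarrow> bool" where
  "is_pinv A X \<longleftrightarrow> A ** X ** A = A \<and> X ** A ** X = X \<and>
     transpose (A ** X) = A ** X \<and> transpose (X ** A) = X ** A"

definition pinv :: "real^'m^'n \<Rightarrow> real^'n^'m" where
  "pinv A = (SOME X. is_pinv A X)"

definition proj_null :: "real^'n^'k \<Rightarrow> real^'n^'n" where
  "proj_null B = mat 1 - transpose B ** pinv (B ** transpose B) ** B"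

definition feas :: "real^'n^'k \<Rightarrow> real^'k \<Rightarrow> (real^'n) set" where
  "feas B q = {x. nonneg_vec x \<and> (\<forall>i. (B *v x) $ i \<le> q $ i)}"

text \<open>Inverse loss, given the x-gradient g = grad_x c_t(x_t; theta).\<close>
definition inv_loss :: "real^'n^'k \<Rightarrow> real^'k \<Rightarrow> real^'n \<Rightarrow> real^'n \<Rightarrow> real" where
  "inv_loss B q x g =
     (norm (pos_part_vec (B *v x - q)))\<^sup>2 +
     Inf ((\<lambda>lam. (norm (g + transpose B *v lam))\<^sup>2 + \<bar>lam \<bullet> (B *v x - q)\<bar>) ` {lam. nonneg_vec lam})"

end

theory Submission
  imports Defs
begin

text \<open>The projector \<open>P\<^sub>t\<close> annihilates the range of \<open>B\<^sub>t\<^sup>T\<close>. KKT stationarity therefore gives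
  \<open>P\<^sub>t \<nabla>c\<^sub>t(x\<^sub>t; \<theta>\<^sub>t) = 0\<close>. For \<open>\<theta>bar\<close>, every term of the infimum in the loss is at least
  \<open>\<parallel>g + B\<^sub>t\<^sup>T \<lambda>\<parallel>\<^sup>2 \<ge> \<parallel>P\<^sub>t g\<parallel>\<^sup>2 / \<parallel>P\<^sub>t\<parallel>\<^sup>2\<close>, so zero loss forces \<open>P\<^sub>t \<nabla>c\<^sub>t(x\<^sub>t; \<theta>bar) = 0\<close> as well,
  and injectivity of \<open>\<theta> \<mapsto> P\<^sub>t \<nabla>c\<^sub>t(x\<^sub>t; \<theta>)\<close> identifies the two parameters.\<close>

declare transpose_matrix_vector [simp del]

lemma inner_transpose_matrix_vector:
  fixes A :: "real^'n^'m"
  shows "(transpose A *v u) \<bullet> v = u \<bullet> (A *v v)"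
  by (simp add: dot_lmul_matrix transpose_matrix_vector)

lemma orthogonal_projector_exists:
  fixes S :: "(real^'n) set"
  assumes "subspace S"
  obtains Q :: "real^'n^'n"
  where "transpose Q = Q" "\<And>v. Q *v v \<in> S" "\<And>x. x \<in> S \<Longrightarrow> Q *v x = x"
proof -
  obtain C where C_orth: "pairwise orthogonal C"
    and C_unit: "\<And>b. b \<in> C \<Longrightarrow> norm b = 1" and C_indep: "independent C"
    and C_span: "span C = S"
    using orthonormal_basis_subspace[OF assms] by metis
  have "finite C" using C_indep independent_imp_finite by blast
  define Q :: "real^'n^'n" where "Q = (\<chi> i j. \<Sum>b\<in>C. b$i * b$j)"
  have Q_apply: "Q *v v = (\<Sum>b\<in>C. (b \<bullet> v) *\<^sub>R b)" for v
    unfolding Q_def matrix_vector_mult_def inner_vec_def vec_eq_iff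
    by (simp add: sum_distrib_left sum_distrib_right mult_ac sum.swap[where A = UNIV])
  have "transpose Q = Q" by (simp add: Q_def transpose_def vec_eq_iff mult.commute)
  moreover have "Q *v v \<in> S" for v
    unfolding Q_apply C_span[symmetric] by (intro span_sum span_scale span_base)
  moreover have "Q *v x = x" if "x \<in> S" for x
  proof -
    have "Q *v b = b" if b: "b \<in> C" for b
    proof -
      have "(b' \<bullet> b) *\<^sub>R b' = (if b' = b then b else 0)" if "b' \<in> C" for b'
        using C_orth C_unit[OF b] b that
        by (auto simp: pairwise_def orthogonal_def dot_square_norm)
      then have "Q *v b = (\<Sum>b'\<in>C. if b' = b then b else 0)"
        unfolding Q_apply by (intro sum.cong) auto
      then show ?thesis using b \<open>finite C\<close> by simp
    qed
    then show ?thesis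
      using linear_eq_on_span[of "(*v) Q" id C x] linear_id that C_span by auto
  qed
  ultimately show ?thesis using that by blast
qed

lemma transpose_eq_0_if_mult_transpose_eq_0:
  fixes B :: "real^'n^'k"
  assumes "B *v (transpose B *v w) = 0"
  shows "transpose B *v w = 0"
proof -
  have "(transpose B *v w) \<bullet> (transpose B *v w) = w \<bullet> (B *v (transpose B *v w))"
    by (rule inner_transpose_matrix_vector)
  then show ?thesis using assms by simp
qed

text \<open>With \<open>Q\<close> the orthogonal projector onto the range of \<open>M\<close>, the matrix \<open>N = M + I - Q\<close> is
  invertible, commutes with \<open>Q\<close>, and \<open>N\<inverse> Q\<close> inverts \<open>M\<close> on its range.\<close>
lemma symmetric_matrix_has_pinv:
  fixes M :: "real^'n^'n"
  assumes sym: "transpose M = M"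
  shows "\<exists>X. is_pinv M X"
proof -
  have "subspace (range ((*v) M))"
    by (rule linear_subspace_image) auto
  then obtain Q :: "real^'n^'n" where Q_sym: "transpose Q = Q"
    and Q_range: "\<And>v. Q *v v \<in> range ((*v) M)"
    and Q_fix: "\<And>x. x \<in> range ((*v) M) \<Longrightarrow> Q *v x = x"
    using orthogonal_projector_exists by metis
  have QQ: "Q ** Q = Q"
    using Q_range Q_fix by (simp add: matrix_eq matrix_vector_mul_assoc[symmetric])
  have QM: "Q ** M = M"
    using Q_fix by (simp add: matrix_eq matrix_vector_mul_assoc[symmetric])
  then have MQ: "M ** Q = M"
    by (metis sym Q_sym matrix_transpose_mul)
  have Q_ker: "Q *v v = 0" if "M *v v = 0" for v
  proof -
    obtain u where u: "Q *v v = M *v u" using Q_range by blast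
    have "(Q *v v) \<bullet> (Q *v v) = v \<bullet> (Q *v (Q *v v))"
      using inner_transpose_matrix_vector[of Q] Q_sym by metis
    also have "\<dots> = (M *v v) \<bullet> u"
      using QQ u inner_transpose_matrix_vector[of M] sym
      by (metis matrix_vector_mul_assoc)
    finally show ?thesis using that by simp
  qed
  define N where "N = M + mat 1 - Q"
  have NQ: "N ** Q = M" and QN: "Q ** N = M"
    using QQ QM MQ
    by (simp_all add: N_def matrix_eq matrix_vector_mul_assoc[symmetric] algebra_simps)
  have "v = 0" if "N *v v = 0" for v
  proof -
    have "M *v v = 0"
      using that QN by (metis matrix_vector_mul_assoc matrix_vector_mult_0_right)
    moreover have "N *v v = M *v v + v - Q *v v"
      by (simp add: N_def algebra_simps)
    ultimately show ?thesis using that Q_ker by simp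
  qed
  then obtain Ni where Ni_N: "Ni ** N = mat 1"
    using matrix_left_invertible_ker by blast
  then have N_Ni: "N ** Ni = mat 1"
    using matrix_left_right_inverse by blast
  have Q_Ni: "Q ** Ni = Ni ** Q"
  proof -
    have "Q ** Ni = Ni ** (N ** Q) ** Ni"
      by (simp add: matrix_mul_assoc Ni_N)
    also have "\<dots> = Ni ** Q ** (N ** Ni)"
      by (simp add: NQ flip: QN) (simp add: matrix_mul_assoc)
    finally show ?thesis by (simp add: N_Ni)
  qed
  define X where "X = Ni ** Q"
  have "M ** X = Q ** (N ** Ni) ** Q"
    by (simp add: X_def matrix_mul_assoc flip: QN)
  then have MX: "M ** X = Q"
    by (simp add: N_Ni QQ)
  have "X ** M = Ni ** (N ** Q)"
    by (simp add: X_def NQ QM flip: matrix_mul_assoc)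
  then have XM: "X ** M = Q"
    by (simp add: Ni_N matrix_mul_assoc)
  have "X ** M ** X = Q ** X"
    by (simp add: XM)
  also have "\<dots> = Ni ** (Q ** Q)"
    by (simp add: X_def matrix_mul_assoc Q_Ni)
  finally have "X ** M ** X = X"
    by (simp add: X_def QQ)
  then have "is_pinv M X"
    unfolding is_pinv_def using MX XM QM Q_sym by simp
  then show ?thesis ..
qed

lemma is_pinv_pinv_symmetric:
  fixes M :: "real^'n^'n"
  assumes "transpose M = M"
  shows "is_pinv M (pinv M)"
  using symmetric_matrix_has_pinv[OF assms] unfolding pinv_def by (rule someI_ex)

lemma proj_null_transpose:
  fixes B :: "real^'n^'k"
  shows "proj_null B *v (transpose B *v l) = 0"
proof -
  define M where "M = B ** transpose B"
  define X where "X = pinv M"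
  have "transpose M = M"
    by (simp add: M_def matrix_transpose_mul)
  then have MXM: "M ** X ** M = M"
    using is_pinv_pinv_symmetric unfolding X_def is_pinv_def by blast
  have "B *v (transpose B *v (X *v (M *v l) - l)) = M *v (X *v (M *v l)) - M *v l"
    by (simp add: M_def matrix_vector_mul_assoc matrix_mul_assoc algebra_simps)
  also have "\<dots> = 0"
    using MXM by (simp add: matrix_vector_mul_assoc matrix_mul_assoc)
  finally have "transpose B *v (X *v (M *v l) - l) = 0"
    by (rule transpose_eq_0_if_mult_transpose_eq_0)
  then show ?thesis
    by (simp add: proj_null_def X_def M_def algebra_simps flip: matrix_vector_mul_assoc)
qed

lemma proj_null_add_transpose:
  "proj_null B *v (g + transpose B *v l) = proj_null B *v g"
  by (simp add: matrix_vector_right_distrib proj_null_transpose)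

lemma inv_loss_eq_0_imp_proj_null_eq_0:
  fixes B :: "real^'n^'k"
  assumes "inv_loss B q x g = 0"
  shows "proj_null B *v g = 0"
proof -
  define S where "S = (\<lambda>l. (norm (g + transpose B *v l))\<^sup>2 + \<bar>l \<bullet> (B *v x - q)\<bar>) ` {l. nonneg_vec l}"
  have "Inf S = - (norm (pos_part_vec (B *v x - q)))\<^sup>2"
    using assms unfolding inv_loss_def S_def by linarith
  then have Inf_S: "Inf S \<le> 0"
    by simp
  have "nonneg_vec (0::real^'k)"
    by (simp add: nonneg_vec_def)
  then have "S \<noteq> {}"
    unfolding S_def by blast
  obtain K where K: "K > 0" "\<And>v. norm (proj_null B *v v) \<le> norm v * K"
    using bounded_linear.pos_bounded[OF matrix_vector_mul_bounded_linear] by blast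
  define e where "e = (norm (proj_null B *v g) / K)\<^sup>2"
  have "e \<le> s" if "s \<in> S" for s
  proof -
    obtain l where s: "s = (norm (g + transpose B *v l))\<^sup>2 + \<bar>l \<bullet> (B *v x - q)\<bar>"
      using \<open>s \<in> S\<close> unfolding S_def by blast
    have "norm (proj_null B *v g) \<le> norm (g + transpose B *v l) * K"
      using K(2)[of "g + transpose B *v l"] by (simp add: proj_null_add_transpose)
    then have "e \<le> (norm (g + transpose B *v l))\<^sup>2"
      unfolding e_def using K(1) by (intro power_mono) (auto simp: divide_le_eq)
    then show ?thesis
      using s by simp
  qed
  then have "e \<le> Inf S"
    using \<open>S \<noteq> {}\<close> by (intro cInf_greatest) auto
  moreover have "e \<ge> 0"
    by (simp add: e_def)
  ultimately have "e = 0"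
    using Inf_S by linarith
  then show ?thesis
    using K(1) e_def by simp
qed

theorem proposition1:
  fixes T :: nat
    and B :: "nat \<Rightarrow> real^'n^'k" and q :: "nat \<Rightarrow> real^'k"
    and xobs :: "nat \<Rightarrow> real^'n"
    and \<Theta> :: "(real^'p) set"
    and c :: "nat \<Rightarrow> real^'n \<Rightarrow> real^'p \<Rightarrow> real"
    and gradc :: "nat \<Rightarrow> real^'n \<Rightarrow> real^'p \<Rightarrow> real^'n"
    and \<mu> :: real
    and \<theta> :: "nat \<Rightarrow> real^'p" and lam :: "nat \<Rightarrow> real^'k"
    and \<theta>bar :: "real^'p"
  assumes q_nonneg: "\<forall>t\<in>{1..T}. nonneg_vec (q t)"
    and x_nonneg: "\<forall>t\<in>{1..T}. nonneg_vec (xobs t)"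
    and grad: "\<forall>t\<in>{1..T}. \<forall>th\<in>\<Theta>. \<forall>x. GDERIV (\<lambda>y. c t y th) x :> gradc t x th"
    and PL: "\<mu> > 0 \<and> (\<forall>t\<in>{1..T}. \<forall>th\<in>\<Theta>. \<forall>x. nonneg_vec x \<longrightarrow>
              (1 / (2 * \<mu>)) * (norm (gradc t x th))\<^sup>2
                \<ge> c t x th - Inf ((\<lambda>y. c t y th) ` feas (B t) (q t)))"
    and KKT: "\<forall>t\<in>{1..T}. \<theta> t \<in> \<Theta> \<and> nonneg_vec (lam t) \<and>
              gradc t (xobs t) (\<theta> t) + transpose (B t) *v lam t = 0 \<and>
              (\<forall>i. (B t *v xobs t) $ i \<le> q t $ i) \<and>
              lam t \<bullet> (B t *v xobs t - q t) = 0"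
    and noiseless: "\<forall>t\<in>{1..T}. xobs t \<in> feas (B t) (q t) \<and>
              (\<forall>y\<in>feas (B t) (q t). c t (xobs t) (\<theta> t) \<le> c t y (\<theta> t))"
    and inj: "\<forall>t\<in>{1..T}. inj_on (\<lambda>th. proj_null (B t) *v gradc t (xobs t) th) \<Theta>"
    and bar_in: "\<theta>bar \<in> \<Theta>"
    and zero_loss: "\<forall>t\<in>{1..T}. inv_loss (B t) (q t) (xobs t) (gradc t (xobs t) \<theta>bar) = 0"
  shows "\<forall>t\<in>{1..T}. \<theta> t = \<theta>bar"
proof
  fix t assume t: "t \<in> {1..T}"
  have "\<theta> t \<in> \<Theta>"
    and stationary: "gradc t (xobs t) (\<theta> t) + transpose (B t) *v lam t = 0"
    using KKT t by auto
  have "proj_null (B t) *v gradc t (xobs t) (\<theta> t) = 0"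
    by (metis stationary proj_null_add_transpose matrix_vector_mult_0_right)
  moreover have "proj_null (B t) *v gradc t (xobs t) \<theta>bar = 0"
    using zero_loss t by (intro inv_loss_eq_0_imp_proj_null_eq_0) auto
  ultimately show "\<theta> t = \<theta>bar"
    using inj t \<open>\<theta> t \<in> \<Theta>\<close> bar_in unfolding inj_on_def by metis
qed

end
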